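(* Let $\lambda$ be a strict partition. Then: (i) the number of standard shifted barely set-valued tableaux of shape $\lambda$ equals $(|\lambda|+1)\,2^{|\lambda|+1}\,g^\lambda\cdot\mathbb{E}(\mathrm{maxchain}_{[\varnothing,\lambda]_{\mathrm{shift}}};\mathrm{ddeg})$; (ii) the number of diagonally unprimed standard shifted barely set-valued tableaux of shape $\lambda$ equals $(|\lambda|+1)\,2^{|\lambda|-\ell(\lambda)}\,g^\lambda\cdot\mathbb{E}\big(\mathrm{maxchain}_{[\varnothing,\lambda]_{\mathrm{shift}}};\,2\cdot\mathrm{ddeg}-\sum_{i=1}^{\ell(\lambda)}\mathcal{T}^-_{[i,i]}\big)$.
   Context: $P^{\mathrm{shift}}_\lambda$ is the set of boxes $[i,j]$ with $1\le i\le\ell(\lambda)$, $i\le j\le i+\lambda_i-1$, ordered by $[i,j]\le[i',j']$ iff $i\le i'$ and $j\le j'$; $[i,i]$ are the main diagonal boxes. $[\varnothing,\lambda]_{\mathrm{shift}}\cong J(P^{\mathrm{shift}}_\lambda)$ is the set of strict partitions contained in $\lambda$ ordered by inclusion; $\mathrm{maxchain}$ gives each element probability proportional to the number of maximal chains through it; $\mathrm{ddeg}$ is the number of covered elements; $\mathcal{T}^-_p(I)=1$ iff $p\in I$ is maximal in $I$, else $0$. Use the alphabet $1<1'<2<2'<\cdots$. A shifted set-valued tableau of shape $\lambda$ assigns to each box $u$ a finite nonempty set $T(u)$ of such letters with: $\max T(u)\le\min T(v)$ whenever $u<v$ in $P^{\mathrm{shift}}_\lambda$; each unprimed letter appears at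 most once in each column; each primed letter at most once in each row. Its monomial is $\mathbf{x}^T=\prod_u\prod_{i\in T(u)}x_i\prod_{i'\in T(u)}x_i$. $T$ is standard if $\mathbf{x}^T=x_1x_2\cdots x_N$ for some $N$; barely set-valued if exactly one box has $\#T(u)=2$ and all others have $\#T(u)=1$; diagonally unprimed if no primed letter occurs in a main diagonal box. $g^\lambda$ is the number of standard shifted tableaux (all $\#T(u)=1$) of shape $\lambda$ with no primed entries (equivalently, linear extensions of $P^{\mathrm{shift}}_\lambda$). *)

theory Defs
  imports Complex_Main "HOL-Library.Multiset" "HOL-Library.Product_Lexorder"
begin

text \<open>A strict partition is a strictly decreasing list of positive integers;
  lambda_i = lam ! (i - 1) (1-indexed rows).\<close>
definition strict_partition :: "nat list \<Rightarrow> bool" where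
  "strict_partition lam \<longleftrightarrow> sorted_wrt (>) lam \<and> (\<forall>x\<in>set lam. 0 < x)"

definition size_part :: "nat list \<Rightarrow> nat" where
  "size_part lam = sum_list lam"

definition shifted_diagram :: "nat list \<Rightarrow> (nat \<times> nat) set" where
  "shifted_diagram lam =
     {(i, j). 1 \<le> i \<and> i \<le> length lam \<and> i \<le> j \<and> j + 1 \<le> i + lam ! (i - 1)}"

definition box_le :: "nat \<times> nat \<Rightarrow> nat \<times> nat \<Rightarrow> bool" where
  "box_le u v \<longleftrightarrow> fst u \<le> fst v \<and> snd u \<le> snd v"

definition box_less :: "nat \<times> nat \<Rightarrow> nat \<times> nat \<Rightarrow> bool" where
  "box_less u v \<longleftrightarrow> box_le u v \<and> u \<noteq> v"

definition order_ideals :: "(nat \<times> nat) set \<Rightarrow> (nat \<times> nat) set set" where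
  "order_ideals P = {I. I \<subseteq> P \<and> (\<forall>u\<in>I. \<forall>v\<in>P. box_le v u \<longrightarrow> v \<in> I)}"

definition max_chains :: "'a set set \<Rightarrow> 'a set set set" where
  "max_chains L = {C. C \<in> chains L \<and> \<not> (\<exists>D\<in>chains L. C \<subset> D)}"

definition nchains_through :: "'a set set \<Rightarrow> 'a set \<Rightarrow> nat" where
  "nchains_through L x = card {C \<in> max_chains L. x \<in> C}"

definition exp_maxchain :: "'a set set \<Rightarrow> ('a set \<Rightarrow> real) \<Rightarrow> real" where
  "exp_maxchain L f =
     (\<Sum>x\<in>L. real (nchains_through L x) * f x) / (\<Sum>x\<in>L. real (nchains_through L x))"

definition covered_by :: "'a set set \<Rightarrow> 'a set \<Rightarrow> 'a set \<Rightarrow> bool" where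
  "covered_by L y x \<longleftrightarrow> y \<in> L \<and> x \<in> L \<and> y \<subset> x \<and> \<not> (\<exists>z\<in>L. y \<subset> z \<and> z \<subset> x)"

definition ddeg :: "'a set set \<Rightarrow> 'a set \<Rightarrow> nat" where
  "ddeg L x = card {y. covered_by L y x}"

definition toggle_minus :: "nat \<times> nat \<Rightarrow> (nat \<times> nat) set \<Rightarrow> nat" where
  "toggle_minus p I = (if p \<in> I \<and> \<not> (\<exists>q\<in>I. box_less p q) then 1 else 0)"

text \<open>Letters: (k, False) is k, (k, True) is k'; k >= 1. The lexicographic
  order on nat \<times> bool gives 1 < 1' < 2 < 2' < ...\<close>
type_synonym letter = "nat \<times> bool"

definition shifted_svt :: "nat list \<Rightarrow> (nat \<times> nat \<Rightarrow> letter set) \<Rightarrow> bool" where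
  "shifted_svt lam T \<longleftrightarrow>
     (\<forall>u. u \<notin> shifted_diagram lam \<longrightarrow> T u = {}) \<and>
     (\<forall>u\<in>shifted_diagram lam. finite (T u) \<and> T u \<noteq> {} \<and> (\<forall>c\<in>T u. 1 \<le> fst c)) \<and>
     (\<forall>u\<in>shifted_diagram lam. \<forall>v\<in>shifted_diagram lam.
        box_less u v \<longrightarrow> Max (T u) \<le> Min (T v)) \<and>
     (\<forall>u\<in>shifted_diagram lam. \<forall>v\<in>shifted_diagram lam. \<forall>k.
        u \<noteq> v \<and> snd u = snd v \<and> (k, False) \<in> T u \<longrightarrow> (k, False) \<notin> T v) \<and>
     (\<forall>u\<in>shifted_diagram lam. \<forall>v\<in>shifted_diagram lam. \<forall>k.
        u \<noteq> v \<and> fst u = fst v \<and> (k, True) \<in> T u \<longrightarrow> (k, True) \<notin> T v)"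

text \<open>The monomial x^T, as a multiset of variable indices.\<close>
definition monomial_svt :: "nat list \<Rightarrow> (nat \<times> nat \<Rightarrow> letter set) \<Rightarrow> nat multiset" where
  "monomial_svt lam T = (\<Sum>u\<in>shifted_diagram lam. \<Sum>c\<in>T u. {# fst c #})"

definition standard_svt :: "nat list \<Rightarrow> (nat \<times> nat \<Rightarrow> letter set) \<Rightarrow> bool" where
  "standard_svt lam T \<longleftrightarrow> (\<exists>N. monomial_svt lam T = mset_set {1..N})"

definition barely_set_valued :: "nat list \<Rightarrow> (nat \<times> nat \<Rightarrow> letter set) \<Rightarrow> bool" where
  "barely_set_valued lam T \<longleftrightarrow>
     (\<exists>!u. u \<in> shifted_diagram lam \<and> card (T u) = 2) \<and>
     (\<forall>u\<in>shifted_diagram lam. card (T u) = 1 \<or> card (T u) = 2)"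

definition diagonally_unprimed :: "nat list \<Rightarrow> (nat \<times> nat \<Rightarrow> letter set) \<Rightarrow> bool" where
  "diagonally_unprimed lam T \<longleftrightarrow>
     (\<forall>i. (i, i) \<in> shifted_diagram lam \<longrightarrow> (\<forall>c\<in>T (i, i). \<not> snd c))"

definition g_shifted :: "nat list \<Rightarrow> nat" where
  "g_shifted lam = card {T. shifted_svt lam T \<and> standard_svt lam T \<and>
      (\<forall>u\<in>shifted_diagram lam. card (T u) = 1) \<and>
      (\<forall>u\<in>shifted_diagram lam. \<forall>c\<in>T u. \<not> snd c)}"

end

theory Submission
  imports Defs "HOL-Library.FuncSet"
begin

text \<open>A standard barely set-valued tableau with entries 1, ..., n + 1 is determined by the box
  holding each entry and by which entries are primed. In the sequence of boxes exactly one box u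
  occurs twice; deleting its second occurrence, at position k + 1, leaves a linear extension p of
  the shifted diagram, and u is a maximal box of the order ideal filled by the entries 1, ..., k.
  Conversely every such triple (p, k, u) arises. Since maximal chains of order ideals correspond to
  linear extensions through their prefix ideals, counting the triples gives (n + 1) g^lambda times
  the maxchain-expectation of the number of maximal boxes of an ideal, which is ddeg. Each entry may
  be primed or not, except that in (ii) entries on the diagonal may not; this gives the powers
  of 2, and the repeated box loses its factor 2 exactly when it is a diagonal box, whence the
  toggle correction.\<close>

section \<open>Order ideals of a set of boxes\<close>

lemma box_less_imp_rank_less: "box_less u v \<Longrightarrow> fst u + snd u < fst v + snd v"
  unfolding box_less_def box_le_def by (cases u; cases v) auto

lemma box_le_iff_eq_or_less: "box_le u v \<longleftrightarrow> u = v \<or> box_less u v"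
  unfolding box_less_def box_le_def by auto

lemma asymp_on_box_less: "asymp_on A box_less"
  by (rule asymp_onI) (meson box_less_imp_rank_less less_asym)

lemma transp_on_box_less: "transp_on A box_less"
proof (rule transp_onI)
  fix u v w assume "box_less u v" "box_less v w"
  then show "box_less u w"
    using box_less_imp_rank_less[of u v] box_less_imp_rank_less[of v w]
    unfolding box_less_def box_le_def by auto
qed

lemma finite_box_minimal:
  assumes "finite S" "S \<noteq> {}"
  obtains u where "u \<in> S" "\<And>v. v \<in> S \<Longrightarrow> \<not> box_less v u"
  using Finite_Set.bex_min_element[OF assms(1) asymp_on_box_less transp_on_box_less assms(2)]
    asymp_onD[OF asymp_on_box_less UNIV_I UNIV_I]
  by metis

lemma finite_box_maximal:
  assumes "finite S" "S \<noteq> {}"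
  obtains u where "u \<in> S" "\<And>v. v \<in> S \<Longrightarrow> \<not> box_less u v"
  using Finite_Set.bex_max_element[OF assms(1) asymp_on_box_less transp_on_box_less assms(2)]
    asymp_onD[OF asymp_on_box_less UNIV_I UNIV_I]
  by metis

definition maximal_boxes :: "(nat \<times> nat) set \<Rightarrow> (nat \<times> nat) set" where
  "maximal_boxes I = {u \<in> I. \<not> (\<exists>v\<in>I. box_less u v)}"

lemma mem_order_ideals_iff:
  "I \<in> order_ideals P \<longleftrightarrow> I \<subseteq> P \<and> (\<forall>u\<in>I. \<forall>v\<in>P. box_le v u \<longrightarrow> v \<in> I)"
  unfolding order_ideals_def by simp

lemma order_ideals_subset: "I \<in> order_ideals P \<Longrightarrow> I \<subseteq> P"
  unfolding mem_order_ideals_iff by blast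

lemma finite_order_ideals: "finite P \<Longrightarrow> finite (order_ideals P)"
  unfolding order_ideals_def by (rule finite_subset[of _ "Pow P"]) auto

lemma order_ideals_Diff_maximal:
  "I \<in> order_ideals P \<Longrightarrow> u \<in> maximal_boxes I \<Longrightarrow> I - {u} \<in> order_ideals P"
  unfolding mem_order_ideals_iff maximal_boxes_def box_le_iff_eq_or_less by blast

lemma maximal_Diff_in_maximal_boxes:
  assumes "I \<in> order_ideals P" "J \<in> order_ideals P"
    and u: "u \<in> I - J" "\<And>v. v \<in> I - J \<Longrightarrow> \<not> box_less u v"
  shows "u \<in> maximal_boxes I"
proof -
  have "v \<notin> J" if "box_less u v" for v
  proof
    assume "v \<in> J"
    moreover have "u \<in> P" using u(1) order_ideals_subset[OF assms(1)] by blast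
    ultimately have "u \<in> J"
      using assms(2) that unfolding mem_order_ideals_iff box_less_def by blast
    then show False using u(1) by blast
  qed
  then show ?thesis using u unfolding maximal_boxes_def by blast
qed

lemma insert_minimal_in_order_ideals:
  assumes "X \<in> order_ideals P" "Y \<in> order_ideals P"
    and u: "u \<in> Y - X" "\<And>v. v \<in> Y - X \<Longrightarrow> \<not> box_less v u"
  shows "insert u X \<in> order_ideals P"
  unfolding mem_order_ideals_iff
proof (intro conjI ballI impI)
  show "insert u X \<subseteq> P" using u(1) assms(1,2) order_ideals_subset by blast
next
  fix w v assume w: "w \<in> insert u X" and v: "v \<in> P" "box_le v w"
  show "v \<in> insert u X"
  proof (cases "w = u")
    case True
    then have "v \<in> Y" using u(1) v assms(2) unfolding mem_order_ideals_iff by blast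
    then show ?thesis using u(2) v(2) True box_le_iff_eq_or_less by blast
  next
    case False
    then show ?thesis using w v assms(1) unfolding mem_order_ideals_iff by blast
  qed
qed

lemma covered_by_order_ideals_iff:
  assumes "finite P" "I \<in> order_ideals P"
  shows "covered_by (order_ideals P) J I \<longleftrightarrow> (\<exists>u\<in>maximal_boxes I. J = I - {u})"
proof
  assume "covered_by (order_ideals P) J I"
  then have J: "J \<in> order_ideals P" "J \<subset> I"
    and no_between: "\<not> (\<exists>K\<in>order_ideals P. J \<subset> K \<and> K \<subset> I)"
    unfolding covered_by_def by auto
  have "finite (I - J)"
    using assms finite_subset order_ideals_subset by blast
  then obtain u where u: "u \<in> I - J" and u_max: "\<And>v. v \<in> I - J \<Longrightarrow> \<not> box_less u v"
    using finite_box_maximal[of "I - J"] J(2) by blast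
  have "u \<in> maximal_boxes I"
    using maximal_Diff_in_maximal_boxes[OF assms(2) J(1) u u_max] .
  moreover have "J = I - {u}"
  proof (rule ccontr)
    assume "J \<noteq> I - {u}"
    then have "J \<subset> I - {u}" "I - {u} \<subset> I" using u J(2) by blast+
    then show False
      using no_between order_ideals_Diff_maximal[OF assms(2) \<open>u \<in> maximal_boxes I\<close>] by blast
  qed
  ultimately show "\<exists>u\<in>maximal_boxes I. J = I - {u}" by blast
next
  assume "\<exists>u\<in>maximal_boxes I. J = I - {u}"
  then obtain u where u: "u \<in> maximal_boxes I" "J = I - {u}" by blast
  then have "u \<in> I" unfolding maximal_boxes_def by blast
  moreover have "\<not> (\<exists>K. I - {u} \<subset> K \<and> K \<subset> I)"
  proof
    assume "\<exists>K. I - {u} \<subset> K \<and> K \<subset> I"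
    then obtain K where K: "I - {u} \<subset> K" "K \<subset> I" by blast
    then have "u \<in> K" by blast
    with K show False by blast
  qed
  moreover have "I - {u} \<subset> I" using \<open>u \<in> I\<close> by blast
  ultimately show "covered_by (order_ideals P) J I"
    unfolding covered_by_def u(2) using order_ideals_Diff_maximal[OF assms(2) u(1)] assms(2)
    by blast
qed

lemma ddeg_order_ideals:
  assumes "finite P" "I \<in> order_ideals P"
  shows "ddeg (order_ideals P) I = card (maximal_boxes I)"
proof -
  have "{J. covered_by (order_ideals P) J I} = (\<lambda>u. I - {u}) ` maximal_boxes I"
    using covered_by_order_ideals_iff[OF assms] by auto
  moreover have "inj_on (\<lambda>u. I - {u}) (maximal_boxes I)"
    unfolding inj_on_def maximal_boxes_def by blast
  ultimately show ?thesis unfolding ddeg_def by (simp add: card_image)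
qed

lemma toggle_minus_eq: "toggle_minus u I = (if u \<in> maximal_boxes I then 1 else 0)"
  unfolding toggle_minus_def maximal_boxes_def by simp

section \<open>Maximal chains of order ideals and linear extensions\<close>

text \<open>A labeling of P by the entries 1, ..., N records the box pos c holding the entry c.
  For N = card P it is a bijection, i.e. a linear extension of P.\<close>

definition respects_boxes :: "nat \<Rightarrow> (nat \<Rightarrow> nat \<times> nat) \<Rightarrow> bool" where
  "respects_boxes N pos \<longleftrightarrow> (\<forall>c\<in>{1..N}. \<forall>d\<in>{1..N}. box_less (pos c) (pos d) \<longrightarrow> c < d)"

definition labelings :: "(nat \<times> nat) set \<Rightarrow> nat \<Rightarrow> (nat \<Rightarrow> nat \<times> nat) set" where
  "labelings P N = {pos \<in> {1..N} \<rightarrow>\<^sub>E P. pos ` {1..N} = P \<and> respects_boxes N pos}"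

abbreviation linear_extensions :: "(nat \<times> nat) set \<Rightarrow> (nat \<Rightarrow> nat \<times> nat) set" where
  "linear_extensions P \<equiv> labelings P (card P)"

lemma labelingsD:
  assumes "pos \<in> labelings P N"
  shows "pos \<in> {1..N} \<rightarrow>\<^sub>E P" "pos ` {1..N} = P"
    "\<And>c d. c \<in> {1..N} \<Longrightarrow> d \<in> {1..N} \<Longrightarrow> box_less (pos c) (pos d) \<Longrightarrow> c < d"
  using assms unfolding labelings_def respects_boxes_def by auto

lemma finite_labelings: "finite P \<Longrightarrow> finite (labelings P N)"
  by (rule finite_subset[of _ "{1..N} \<rightarrow>\<^sub>E P"]) (auto simp: labelings_def finite_PiE)

lemma linear_extension_bij_betw: "p \<in> linear_extensions P \<Longrightarrow> bij_betw p {1..card P} P"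
  using labelingsD(2) by (simp add: bij_betw_def eq_card_imp_inj_on)

lemma labeling_prefix_in_order_ideals:
  assumes "pos \<in> labelings P N" "k \<le> N"
  shows "pos ` {1..k} \<in> order_ideals P"
  unfolding mem_order_ideals_iff
proof (intro conjI ballI impI)
  show "pos ` {1..k} \<subseteq> P" using labelingsD(2)[OF assms(1)] assms(2) by auto
next
  fix w v assume w: "w \<in> pos ` {1..k}" and v: "v \<in> P" "box_le v w"
  then obtain c where c: "c \<in> {1..k}" "w = pos c" by blast
  obtain d where d: "d \<in> {1..N}" "v = pos d" using v(1) labelingsD(2)[OF assms(1)] by blast
  show "v \<in> pos ` {1..k}"
  proof (cases "v = w")
    case False
    then have "d < c"
      using labelingsD(3)[OF assms(1), of d c] v(2) c d assms(2) box_le_iff_eq_or_less by auto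
    then show ?thesis using c d by auto
  qed (use w in blast)
qed

lemma card_linear_extension_prefix:
  assumes "p \<in> linear_extensions P" "k \<le> card P"
  shows "card (p ` {1..k}) = k"
  using assms inj_on_subset[OF bij_betw_imp_inj_on[OF linear_extension_bij_betw]]
  by (simp add: card_image)

lemma linear_extension_prefix_Suc:
  assumes "p \<in> linear_extensions P" "Suc j \<le> card P"
  shows "p ` {1..Suc j} = insert (p (Suc j)) (p ` {1..j})" "p (Suc j) \<notin> p ` {1..j}"
proof -
  show "p ` {1..Suc j} = insert (p (Suc j)) (p ` {1..j})"
    by (simp add: atLeastAtMostSuc_conv)
  then show "p (Suc j) \<notin> p ` {1..j}"
    using card_linear_extension_prefix[OF assms(1)] assms(2)
    by (metis Suc_leD card_insert_if finite_atLeastAtMost finite_imageI n_not_Suc_n)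
qed

definition prefix_chain :: "(nat \<Rightarrow> nat \<times> nat) \<Rightarrow> nat \<Rightarrow> (nat \<times> nat) set set" where
  "prefix_chain p n = (\<lambda>k. p ` {1..k}) ` {0..n}"

lemma max_chainsD:
  assumes "C \<in> max_chains L"
  shows "C \<subseteq> L" "\<And>A B. A \<in> C \<Longrightarrow> B \<in> C \<Longrightarrow> A \<subseteq> B \<or> B \<subseteq> A"
    "\<And>Z. Z \<in> L \<Longrightarrow> (\<forall>Y\<in>C. Y \<subseteq> Z \<or> Z \<subseteq> Y) \<Longrightarrow> Z \<in> C"
proof -
  show sub: "C \<subseteq> L" and comp: "\<And>A B. A \<in> C \<Longrightarrow> B \<in> C \<Longrightarrow> A \<subseteq> B \<or> B \<subseteq> A"
    using assms unfolding max_chains_def chains_def chain_subset_def by blast+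
  fix Z assume Z: "Z \<in> L" "\<forall>Y\<in>C. Y \<subseteq> Z \<or> Z \<subseteq> Y"
  then have "insert Z C \<in> chains L"
    using sub comp unfolding chains_def chain_subset_def by blast
  then show "Z \<in> C" using assms unfolding max_chains_def by blast
qed

lemma prefix_chain_in_max_chains:
  assumes "finite P" "p \<in> linear_extensions P"
  shows "prefix_chain p (card P) \<in> max_chains (order_ideals P)"
proof -
  let ?C = "prefix_chain p (card P)"
  have comparable: "p ` {1..i} \<subseteq> p ` {1..j} \<or> p ` {1..j} \<subseteq> p ` {1..i}" for i j :: nat
    by (cases "i \<le> j") (auto intro: image_mono)
  have chain: "?C \<in> chains (order_ideals P)"
    using labeling_prefix_in_order_ideals[OF assms(2)] comparable
    unfolding chains_def chain_subset_def prefix_chain_def by auto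
  have "X \<in> ?C" if D: "D \<in> chains (order_ideals P)" "?C \<subseteq> D" and X: "X \<in> D" for D X
  proof -
    have "X \<subseteq> P" using D(1) X order_ideals_subset unfolding chains_def by blast
    then have k: "card X \<le> card P" using assms(1) by (simp add: card_mono)
    then have "p ` {1..card X} \<in> D" using D(2) unfolding prefix_chain_def by auto
    then have "p ` {1..card X} \<subseteq> X \<or> X \<subseteq> p ` {1..card X}"
      using D(1) X unfolding chains_def chain_subset_def by blast
    then have "X = p ` {1..card X}"
      using card_linear_extension_prefix[OF assms(2) k] finite_subset[OF \<open>X \<subseteq> P\<close> assms(1)]
      by (metis card_subset_eq finite_atLeastAtMost finite_imageI)
    then show ?thesis using k unfolding prefix_chain_def by auto
  qed
  then show ?thesis using chain unfolding max_chains_def by blast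
qed

lemma inj_on_prefix_chain: "inj_on (\<lambda>p. prefix_chain p (card P)) (linear_extensions P)"
proof (rule inj_onI)
  fix p q assume p: "p \<in> linear_extensions P" and q: "q \<in> linear_extensions P"
    and eq: "prefix_chain p (card P) = prefix_chain q (card P)"
  have same_prefix: "p ` {1..k} = q ` {1..k}" if k: "k \<le> card P" for k
  proof -
    have "p ` {1..k} \<in> prefix_chain q (card P)"
      using k eq[symmetric] unfolding prefix_chain_def by auto
    then obtain j where "j \<le> card P" "p ` {1..k} = q ` {1..j}" unfolding prefix_chain_def by auto
    then show ?thesis
      using card_linear_extension_prefix[OF p k] card_linear_extension_prefix[OF q] by metis
  qed
  show "p = q"
  proof (rule extensionalityI[of _ "{1..card P}"])
    show "p \<in> extensional {1..card P}" "q \<in> extensional {1..card P}"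
      using labelingsD(1)[OF p] labelingsD(1)[OF q] by (auto simp: PiE_def)
  next
    fix c assume c: "c \<in> {1..card P}"
    then obtain j where j: "c = Suc j" "Suc j \<le> card P" by (cases c) auto
    then have "p ` {1..c} - p ` {1..j} = {p c}" "q ` {1..c} - q ` {1..j} = {q c}"
      unfolding j(1) linear_extension_prefix_Suc(1)[OF p j(2)] linear_extension_prefix_Suc(1)[OF q j(2)]
      using linear_extension_prefix_Suc(2)[OF p j(2)] linear_extension_prefix_Suc(2)[OF q j(2)]
      by (simp_all add: insert_Diff_if)
    then show "p c = q c" using same_prefix[of j] same_prefix[of c] j by auto
  qed
qed

lemma max_chain_augment:
  assumes "finite P" "C \<in> max_chains (order_ideals P)" "X \<in> C" "X \<noteq> P"
  obtains u where "u \<notin> X" "insert u X \<in> C"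
proof -
  note C = max_chainsD[OF assms(2)]
  have ideal: "Y \<in> order_ideals P" if "Y \<in> C" for Y
    using that C(1) by blast
  have fin: "finite Y" if "Y \<in> C" for Y
    using ideal[OF that] order_ideals_subset assms(1) finite_subset by blast
  have "P \<in> C"
    using ideal order_ideals_subset by (intro C(3)) (auto simp: mem_order_ideals_iff)
  moreover have "X \<subset> P" using assms(3,4) ideal order_ideals_subset by blast
  ultimately obtain Y where Y: "Y \<in> C" "X \<subset> Y"
    and Y_least: "\<And>W. W \<in> C \<Longrightarrow> X \<subset> W \<Longrightarrow> card Y \<le> card W"
    using ex_has_least_nat[of "\<lambda>W. W \<in> C \<and> X \<subset> W" P card] by blast
  \<comment> \<open>Y is the next member of C above X; adding to X a minimal box of Y - X gives an ideal
    comparable with every member of C.\<close>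
  obtain u where u: "u \<in> Y - X" and u_min: "\<And>v. v \<in> Y - X \<Longrightarrow> \<not> box_less v u"
    using finite_box_minimal[of "Y - X"] fin[OF Y(1)] Y(2) by blast
  have "insert u X \<in> order_ideals P"
    using insert_minimal_in_order_ideals[OF ideal[OF assms(3)] ideal[OF Y(1)] u u_min] .
  moreover have "W \<subseteq> insert u X \<or> insert u X \<subseteq> W" if W: "W \<in> C" for W
  proof (cases "W \<subseteq> X")
    case False
    then have XW: "X \<subset> W" using C(2)[OF W assms(3)] by auto
    then have "card Y \<le> card W" by (rule Y_least[OF W])
    have "\<not> W \<subset> Y"
    proof
      assume "W \<subset> Y"
      then have "card W < card Y" by (rule psubset_card_mono[OF fin[OF Y(1)]])
      with \<open>card Y \<le> card W\<close> show False by simp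
    qed
    then have "Y \<subseteq> W" using C(2)[OF W Y(1)] by blast
    then show ?thesis using u XW by blast
  qed blast
  ultimately show ?thesis using that u C(3) by blast
qed

lemma max_chain_has_card:
  assumes "finite P" "C \<in> max_chains (order_ideals P)" "k \<le> card P"
  shows "\<exists>X\<in>C. card X = k"
  using assms(3)
proof (induction k)
  case 0
  have "{} \<in> order_ideals P" by (simp add: mem_order_ideals_iff)
  then have "{} \<in> C" using max_chainsD(3)[OF assms(2)] by blast
  then show ?case by force
next
  case (Suc k)
  then obtain X where X: "X \<in> C" "card X = k" by auto
  then have "X \<noteq> P" using Suc.prems by auto
  then obtain u where "u \<notin> X" "insert u X \<in> C"
    by (rule max_chain_augment[OF assms(1,2) X(1)])
  moreover have "finite X"
    using X(1) max_chainsD(1)[OF assms(2)] order_ideals_subset assms(1)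
      by (meson finite_subset subsetD)
  ultimately show ?case using X(2) by (intro bexI[of _ "insert u X"]) auto
qed

lemma labeling_of_ideal_chain:
  assumes ideals: "\<And>k. k \<le> n \<Longrightarrow> X k \<in> order_ideals P"
    and "X 0 = {}" "X n = P"
    and step: "\<And>k. k < n \<Longrightarrow> \<exists>u. u \<notin> X k \<and> X (Suc k) = insert u (X k)"
  obtains p where "p \<in> labelings P n" "\<And>k. k \<le> n \<Longrightarrow> X k = p ` {1..k}"
proof -
  define p where
    "p c = (if c \<in> {1..n} then (SOME u. u \<notin> X (c - 1) \<and> X c = insert u (X (c - 1))) else undefined)"
    for c
  have p_step: "p (Suc k) \<notin> X k \<and> X (Suc k) = insert (p (Suc k)) (X k)" if "k < n" for k
    using someI_ex[OF step[OF that]] that unfolding p_def by simp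
  have prefix: "X k = p ` {1..k}" if "k \<le> n" for k
    using that
  proof (induction k)
    case (Suc k)
    then show ?case using p_step[of k] by (simp add: atLeastAtMostSuc_conv)
  qed (simp add: \<open>X 0 = {}\<close>)
  have "p \<in> labelings P n"
    unfolding labelings_def respects_boxes_def
  proof (intro CollectI conjI ballI impI)
    show "p ` {1..n} = P" using prefix[of n] \<open>X n = P\<close> by simp
    then show "p \<in> {1..n} \<rightarrow>\<^sub>E P" by (auto simp: p_def)
  next
    fix c d assume c: "c \<in> {1..n}" and d: "d \<in> {1..n}" and less: "box_less (p c) (p d)"
    show "c < d"
    proof (rule ccontr)
      assume "\<not> c < d"
      moreover have "c \<noteq> d" using less unfolding box_less_def by blast
      ultimately obtain j where j: "c = Suc j" "d \<le> j" "j < n" using c by (cases c) auto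
      then have "p d \<in> X j" using prefix[of j] d by auto
      moreover have "p c \<in> P" using prefix[of n] \<open>X n = P\<close> c by auto
      ultimately have "p c \<in> X j"
        using ideals[of j] j less unfolding mem_order_ideals_iff box_less_def by auto
      then show False using p_step[of j] j by simp
    qed
  qed
  then show ?thesis using that prefix by blast
qed

lemma comparable_card_Suc_eq_insert:
  assumes "finite A" "finite B" "A \<subseteq> B \<or> B \<subseteq> A" "card B = Suc (card A)"
  shows "\<exists>u. u \<notin> A \<and> B = insert u A"
proof -
  have "\<not> B \<subseteq> A"
  proof
    assume "B \<subseteq> A"
    then have "card B \<le> card A" by (rule card_mono[OF assms(1)])
    with assms(4) show False by simp
  qed
  then have "A \<subseteq> B" using assms(3) by blast
  then have "card (B - A) = 1" using assms by (simp add: card_Diff_subset)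
  then obtain u where "B - A = {u}" by (rule card_1_singletonE)
  then show ?thesis using \<open>A \<subseteq> B\<close> by blast
qed

lemma max_chain_eq_prefix_chain:
  assumes "finite P" "C \<in> max_chains (order_ideals P)"
  obtains p where "p \<in> linear_extensions P" "C = prefix_chain p (card P)"
proof -
  let ?n = "card P"
  note C = max_chainsD[OF assms(2)]
  have sub: "Y \<subseteq> P" if "Y \<in> C" for Y using that C(1) order_ideals_subset by blast
  have fin: "finite Y" if "Y \<in> C" for Y using sub[OF that] assms(1) by (rule finite_subset)
  have unique: "Y = Z" if "Y \<in> C" "Z \<in> C" "card Y = card Z" for Y Z
    using C(2)[OF that(1,2)] fin that by (metis card_subset_eq)
  obtain X where X: "\<And>k. k \<le> ?n \<Longrightarrow> X k \<in> C \<and> card (X k) = k"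
    using max_chain_has_card[OF assms] by metis
  have "X 0 = {}" using X[of 0] fin by (meson card_0_eq le0)
  have "X ?n = P" using X[of ?n] sub by (intro card_subset_eq[OF assms(1)]) auto
  have "\<exists>u. u \<notin> X k \<and> X (Suc k) = insert u (X k)" if "k < ?n" for k
  proof -
    have Xk: "X k \<in> C" "card (X k) = k" and XSk: "X (Suc k) \<in> C" "card (X (Suc k)) = Suc k"
      using X[of k] X[of "Suc k"] that by auto
    show ?thesis
      using comparable_card_Suc_eq_insert[OF fin[OF Xk(1)] fin[OF XSk(1)] C(2)[OF Xk(1) XSk(1)]]
        Xk(2) XSk(2)
      by simp
  qed
  then obtain p where p: "p \<in> linear_extensions P" "\<And>k. k \<le> ?n \<Longrightarrow> X k = p ` {1..k}"
    using labeling_of_ideal_chain[of ?n X P] X C(1) \<open>X 0 = {}\<close> \<open>X ?n = P\<close> by blast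
  have "C = prefix_chain p ?n"
  proof
    show "prefix_chain p ?n \<subseteq> C" unfolding prefix_chain_def using X p(2) by auto
    show "C \<subseteq> prefix_chain p ?n"
    proof
      fix Y assume Y: "Y \<in> C"
      then have k: "card Y \<le> ?n" using sub assms(1) by (simp add: card_mono)
      then have "Y = p ` {1..card Y}" using unique[OF Y] X p(2) by metis
      then show "Y \<in> prefix_chain p ?n" using k unfolding prefix_chain_def by auto
    qed
  qed
  then show ?thesis using that p(1) by blast
qed

lemma bij_betw_prefix_chain:
  assumes "finite P"
  shows "bij_betw (\<lambda>p. prefix_chain p (card P)) (linear_extensions P) (max_chains (order_ideals P))"
  unfolding bij_betw_def
  using inj_on_prefix_chain prefix_chain_in_max_chains[OF assms] max_chain_eq_prefix_chain[OF assms]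
  by blast

lemma sum_nchains_through:
  fixes h :: "'a set \<Rightarrow> 'b::comm_semiring_1"
  assumes "finite L"
  shows "(\<Sum>I\<in>L. of_nat (nchains_through L I) * h I) = (\<Sum>C\<in>max_chains L. \<Sum>I\<in>C. h I)"
proof -
  have fin: "finite (max_chains L)"
    by (rule finite_subset[of _ "Pow L"]) (use assms in \<open>auto simp: max_chains_def chains_def\<close>)
  have sub: "C \<subseteq> L" if "C \<in> max_chains L" for C
    using that unfolding max_chains_def chains_def by blast
  have "(\<Sum>I\<in>L. of_nat (nchains_through L I) * h I)
      = (\<Sum>I\<in>L. \<Sum>C\<in>max_chains L. if I \<in> C then h I else 0)"
    unfolding nchains_through_def
    by (intro sum.cong refl) (simp add: sum.If_cases[OF fin] sum_distrib_right Int_def)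
  also have "\<dots> = (\<Sum>C\<in>max_chains L. \<Sum>I\<in>L. if I \<in> C then h I else 0)"
    by (rule sum.swap)
  also have "\<dots> = (\<Sum>C\<in>max_chains L. \<Sum>I\<in>C. h I)"
  proof (rule sum.cong[OF refl])
    fix C assume "C \<in> max_chains L"
    then have "{I \<in> L. I \<in> C} = C" using sub by blast
    then show "(\<Sum>I\<in>L. if I \<in> C then h I else 0) = (\<Sum>I\<in>C. h I)"
      using sum.inter_filter[OF assms, of h "\<lambda>I. I \<in> C"] by simp
  qed
  finally show ?thesis .
qed

lemma sum_nchains_through_order_ideals:
  fixes h :: "(nat \<times> nat) set \<Rightarrow> 'b::comm_semiring_1"
  assumes "finite P"
  shows "(\<Sum>I\<in>order_ideals P. of_nat (nchains_through (order_ideals P) I) * h I)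
       = (\<Sum>p\<in>linear_extensions P. \<Sum>k=0..card P. h (p ` {1..k}))"
proof -
  have "inj_on (\<lambda>k. p ` {1..k}) {0..card P}" if "p \<in> linear_extensions P" for p
    using card_linear_extension_prefix[OF that] by (intro inj_onI) (metis atLeastAtMost_iff)
  then have "(\<Sum>I\<in>prefix_chain p (card P). h I) = (\<Sum>k=0..card P. h (p ` {1..k}))"
    if "p \<in> linear_extensions P" for p
    using that unfolding prefix_chain_def by (simp add: sum.reindex)
  then show ?thesis
    using sum_nchains_through[OF finite_order_ideals[OF assms], of h]
      sum.reindex_bij_betw[OF bij_betw_prefix_chain[OF assms], of "\<lambda>C. \<Sum>I\<in>C. h I"]
    by simp
qed

lemma exp_maxchain_order_ideals:
  assumes "finite P"
  shows "exp_maxchain (order_ideals P) h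
    = (\<Sum>p\<in>linear_extensions P. \<Sum>k=0..card P. h (p ` {1..k}))
      / (real (card (linear_extensions P)) * real (card P + 1))"
  unfolding exp_maxchain_def
  using sum_nchains_through_order_ideals[OF assms, of h]
    sum_nchains_through_order_ideals[OF assms, of "\<lambda>_. 1 :: real"]
  by (simp add: mult.commute)

lemma exp_maxchain_cong: "(\<And>I. I \<in> L \<Longrightarrow> f I = g I) \<Longrightarrow> exp_maxchain L f = exp_maxchain L g"
  unfolding exp_maxchain_def by simp

lemma exp_maxchain_cmult: "exp_maxchain L (\<lambda>I. c * f I) = c * exp_maxchain L f"
  unfolding exp_maxchain_def by (simp add: sum_distrib_left mult.left_commute)

section \<open>Labelings with one repeated entry\<close>

text \<open>A labeling of P by card P + 1 entries repeats exactly one box u. Deleting its second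
  occurrence, at position k + 1, leaves a linear extension p in which u is maximal among the boxes
  p ` {1..k}; insert_entry reverses the deletion.\<close>

definition skip :: "nat \<Rightarrow> nat \<Rightarrow> nat" where
  "skip k c = (if c \<le> k then c else Suc c)"

definition insert_entry ::
  "nat \<Rightarrow> (nat \<Rightarrow> nat \<times> nat) \<Rightarrow> nat \<Rightarrow> nat \<times> nat \<Rightarrow> nat \<Rightarrow> nat \<times> nat" where
  "insert_entry n p k u c =
     (if c \<le> k then p c else if c = Suc k then u else if c \<le> Suc n then p (c - 1) else undefined)"

definition insertion_data :: "(nat \<times> nat) set \<Rightarrow> ((nat \<Rightarrow> nat \<times> nat) \<times> nat \<times> (nat \<times> nat)) set"
  where "insertion_data P = (SIGMA p:linear_extensions P. SIGMA k:{0..card P}.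
    maximal_boxes (p ` {1..k}))"

lemma skip_less_iff: "skip k c < skip k d \<longleftrightarrow> c < d"
  unfolding skip_def by auto

lemma bij_betw_skip: "k \<le> n \<Longrightarrow> bij_betw (skip k) {1..n} ({1..Suc n} - {Suc k})"
  unfolding skip_def
  by (rule bij_betw_byWitness[where f' = "\<lambda>c. if c \<le> k then c else c - 1"]) auto

lemma skip_cases:
  assumes "k \<le> n" "c \<in> {1..Suc n}"
  obtains "c = Suc k" | c' where "c' \<in> {1..n}" "c = skip k c'"
  using bij_betw_skip[OF assms(1)] assms(2) unfolding bij_betw_def by blast

lemma insert_entry_skip: "c \<in> {1..n} \<Longrightarrow> k \<le> n \<Longrightarrow> insert_entry n p k u (skip k c) = p c"
  unfolding insert_entry_def skip_def by auto

lemma insert_entry_Suc: "insert_entry n p k u (Suc k) = u"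
  unfolding insert_entry_def by auto

lemma insertion_dataD:
  assumes "(p, k, u) \<in> insertion_data P"
  shows "p \<in> linear_extensions P" "k \<le> card P" "u \<in> maximal_boxes (p ` {1..k})"
  using assms unfolding insertion_data_def by auto

lemma insertion_dataE:
  assumes "(p, k, u) \<in> insertion_data P"
  obtains j where "j \<in> {1..k}" "u = p j" "\<And>c. c \<in> {1..k} \<Longrightarrow> \<not> box_less u (p c)"
proof -
  have u: "u \<in> p ` {1..k}" "\<forall>v\<in>p ` {1..k}. \<not> box_less u v"
    using insertion_dataD(3)[OF assms] unfolding maximal_boxes_def by auto
  then obtain j where "j \<in> {1..k}" "u = p j" by blast
  then show thesis using that u(2) by blast
qed

lemma respects_boxes_insert_entry:
  assumes "(p, k, u) \<in> insertion_data P"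
  shows "respects_boxes (Suc (card P)) (insert_entry (card P) p k u)"
  unfolding respects_boxes_def
proof (intro ballI impI)
  let ?n = "card P" and ?q = "insert_entry (card P) p k u"
  have k: "k \<le> ?n" using insertion_dataD(2)[OF assms] .
  note p_mono = labelingsD(3)[OF insertion_dataD(1)[OF assms]]
  obtain j where j: "j \<in> {1..k}" "u = p j" and u_max: "\<And>c. c \<in> {1..k} \<Longrightarrow> \<not> box_less u (p c)"
    by (metis insertion_dataE[OF assms])
  fix c d assume c: "c \<in> {1..Suc ?n}" and d: "d \<in> {1..Suc ?n}" and less: "box_less (?q c) (?q d)"
  show "c < d"
  proof (cases rule: skip_cases[OF k c])
    case c_new: 1
    then show ?thesis
    proof (cases rule: skip_cases[OF k d])
      case 1 then show ?thesis using less c_new unfolding box_less_def by simp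
    next
      case (2 d')
      then have "box_less u (p d')" using less c_new
        by (simp add: insert_entry_Suc insert_entry_skip k)
      then have "\<not> d' \<le> k" using u_max 2(1) by auto
      then show ?thesis using c_new 2(2) unfolding skip_def by auto
    qed
  next
    case (2 c')
    then show ?thesis
    proof (cases rule: skip_cases[OF k d])
      case 1
      then have "box_less (p c') (p j)" using less 2 j(2)
        by (simp add: insert_entry_Suc insert_entry_skip k)
      then have "c' < j" using p_mono 2(1) j(1) k by auto
      then show ?thesis using 1 2(2) j(1) unfolding skip_def by auto
    next
      case (2 d')
      then have "box_less (p c') (p d')" using less \<open>c' \<in> {1..?n}\<close> \<open>c = skip k c'\<close>
        by (simp add: insert_entry_skip k)
      then show ?thesis using p_mono \<open>c' \<in> {1..?n}\<close> \<open>c = skip k c'\<close> 2 skip_less_iff by auto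
    qed
  qed
qed

lemma insert_entry_in_labelings:
  assumes "(p, k, u) \<in> insertion_data P"
  shows "insert_entry (card P) p k u \<in> labelings P (Suc (card P))"
proof -
  let ?n = "card P" and ?q = "insert_entry (card P) p k u"
  have k: "k \<le> ?n" using insertion_dataD(2)[OF assms] .
  note p = labelingsD[OF insertion_dataD(1)[OF assms]]
  obtain j where j: "j \<in> {1..k}" "u = p j"
    using insertion_dataE[OF assms] by blast
  have "?q c \<in> P" if "c \<in> {1..Suc ?n}" for c
  proof (cases rule: skip_cases[OF k that])
    case 1 then show ?thesis using j k p(2) by (auto simp: insert_entry_Suc)
  next
    case (2 c') then show ?thesis using p(2) by (auto simp: insert_entry_skip k)
  qed
  moreover have "P \<subseteq> ?q ` {1..Suc ?n}"
  proof
    fix v assume "v \<in> P"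
    then obtain c where "c \<in> {1..?n}" "v = p c" using p(2) by blast
    moreover from this have "skip k c \<in> {1..Suc ?n}" unfolding skip_def by auto
    ultimately show "v \<in> ?q ` {1..Suc ?n}" by (metis image_eqI insert_entry_skip k)
  qed
  moreover have "?q c = undefined" if "c \<notin> {1..Suc ?n}" for c
    using that p(1) k unfolding insert_entry_def by (auto simp: PiE_def extensional_def)
  ultimately show ?thesis
    using respects_boxes_insert_entry[OF assms] unfolding labelings_def by auto
qed

lemma insert_entry_repeat_iff:
  assumes "(p, k, u) \<in> insertion_data P" "c \<in> {1..Suc (card P)}"
  shows "(\<exists>i\<in>{1..Suc (card P)}. i < c \<and> insert_entry (card P) p k u i = insert_entry (card P) p k u c)
    \<longleftrightarrow> c = Suc k"
proof -
  let ?n = "card P" and ?q = "insert_entry (card P) p k u"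
  have k: "k \<le> ?n" using insertion_dataD(2)[OF assms(1)] .
  have p_inj: "inj_on p {1..?n}"
    using bij_betw_imp_inj_on[OF linear_extension_bij_betw[OF insertion_dataD(1)[OF assms(1)]]] .
  obtain j where j: "j \<in> {1..k}" "u = p j"
    using insertion_dataE[OF assms(1)] by blast
  have q_j: "?q j = u" using j unfolding insert_entry_def by auto
  show ?thesis
  proof
    assume "c = Suc k"
    then show "\<exists>i\<in>{1..Suc ?n}. i < c \<and> ?q i = ?q c"
      using j k q_j by (intro bexI[of _ j]) (auto simp: insert_entry_Suc)
  next
    assume "\<exists>i\<in>{1..Suc ?n}. i < c \<and> ?q i = ?q c"
    then obtain i where i: "i \<in> {1..Suc ?n}" "i < c" "?q i = ?q c" by blast
    show "c = Suc k"
    proof (cases rule: skip_cases[OF k assms(2)])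
      case (2 c')
      then have q_c: "?q c = p c'" using insert_entry_skip k by simp
      show ?thesis
      proof (cases rule: skip_cases[OF k i(1)])
        case 1
        then have "j = c'" using i(3) q_c j k 2(1) inj_onD[OF p_inj, of j c']
          by (simp add: insert_entry_Suc)
        then show ?thesis using 1 i(2) 2(2) j(1) unfolding skip_def by auto
      next
        case (2 i')
        then have "i' = c'"
          using i(3) q_c \<open>c' \<in> {1..?n}\<close> inj_onD[OF p_inj, of i' c']
            by (simp add: insert_entry_skip k)
        then show ?thesis using i(2) 2(2) \<open>c = skip k c'\<close> by simp
      qed
    qed
  qed
qed

lemma inj_on_insert_entry: "inj_on (\<lambda>(p, k, u). insert_entry (card P) p k u) (insertion_data P)"
proof (rule inj_onI)
  fix y y' assume y: "y \<in> insertion_data P" "y' \<in> insertion_data P"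
    and eq_y: "(\<lambda>(p, k, u). insert_entry (card P) p k u) y
      = (\<lambda>(p, k, u). insert_entry (card P) p k u) y'"
  obtain p k u p' k' u' where yy: "y = (p, k, u)" "y' = (p', k', u')" by (cases y, cases y')
  have x: "(p, k, u) \<in> insertion_data P" and x': "(p', k', u') \<in> insertion_data P"
    using y yy by auto
  have eq: "insert_entry (card P) p k u = insert_entry (card P) p' k' u'" using eq_y yy by simp
  let ?n = "card P"
  have k: "k \<le> ?n" "k' \<le> ?n" using insertion_dataD(2)[OF x] insertion_dataD(2)[OF x'] by auto
  then have "Suc k = Suc k'"
    using insert_entry_repeat_iff[OF x, of "Suc k"] insert_entry_repeat_iff[OF x', of "Suc k"] eq
      by simp
  then have kk: "k = k'" by simp
  have uu: "u = u'" using eq kk insert_entry_Suc by metis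
  have "p = p'"
  proof (rule PiE_ext)
    show "p \<in> {1..?n} \<rightarrow>\<^sub>E P" "p' \<in> {1..?n} \<rightarrow>\<^sub>E P"
      using labelingsD(1) insertion_dataD(1)[OF x] insertion_dataD(1)[OF x'] by auto
  next
    fix c assume "c \<in> {1..?n}"
    then show "p c = p' c" using insert_entry_skip[of c ?n] k eq kk by metis
  qed
  then show "y = y'" using kk uu yy by simp
qed

lemma restrict_skip_in_labelings:
  assumes q: "q \<in> labelings P (Suc n)" and "a \<in> {1..k}" "k \<le> n" "q a = q (Suc k)"
  shows "restrict (\<lambda>c. q (skip k c)) {1..n} \<in> labelings P n"
  unfolding labelings_def respects_boxes_def
proof (intro CollectI conjI ballI impI)
  have "restrict (\<lambda>c. q (skip k c)) {1..n} ` {1..n} = q ` skip k ` {1..n}" by auto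
  also have "\<dots> = q ` ({1..Suc n} - {Suc k})"
    using bij_betw_skip[OF assms(3)] unfolding bij_betw_def by simp
  also have "\<dots> = q ` {1..Suc n}"
  proof
    show "q ` {1..Suc n} \<subseteq> q ` ({1..Suc n} - {Suc k})"
    proof
      fix v assume "v \<in> q ` {1..Suc n}"
      then obtain x where x: "x \<in> {1..Suc n}" "v = q x" by blast
      show "v \<in> q ` ({1..Suc n} - {Suc k})"
      proof (cases "x = Suc k")
        case True
        then show ?thesis using x(2) assms(2,3,4) by (intro rev_image_eqI[of a]) auto
      qed (use x in auto)
    qed
  qed auto
  finally show img: "restrict (\<lambda>c. q (skip k c)) {1..n} ` {1..n} = P"
    using labelingsD(2)[OF q] by simp
  then show "restrict (\<lambda>c. q (skip k c)) {1..n} \<in> {1..n} \<rightarrow>\<^sub>E P" by auto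
next
  fix c d assume c: "c \<in> {1..n}" and d: "d \<in> {1..n}"
    and "box_less (restrict (\<lambda>c. q (skip k c)) {1..n} c) (restrict (\<lambda>c. q (skip k c)) {1..n} d)"
  then have "box_less (q (skip k c)) (q (skip k d))" by simp
  moreover have "skip k c \<in> {1..Suc n}" "skip k d \<in> {1..Suc n}"
    using c d unfolding skip_def by auto
  ultimately have "skip k c < skip k d" using labelingsD(3)[OF q] by blast
  then show "c < d" by (simp add: skip_less_iff)
qed

lemma labeling_eq_insert_entry:
  assumes "finite P" and q: "q \<in> labelings P (Suc (card P))"
  obtains p k u where "(p, k, u) \<in> insertion_data P" "q = insert_entry (card P) p k u"
proof -
  let ?n = "card P"
  have "\<not> inj_on q {1..Suc ?n}"
    using labelingsD(2)[OF q] by (metis card_atLeastAtMost card_image diff_Suc_1 n_not_Suc_n)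
  then obtain a b where ab: "a \<in> {1..Suc ?n}" "b \<in> {1..Suc ?n}" "a < b" "q a = q b"
    unfolding inj_on_def by (metis linorder_neqE_nat)
  define k where "k = b - 1"
  have b: "b = Suc k" "k \<le> ?n" "a \<in> {1..k}" using ab unfolding k_def by auto
  define p where "p = restrict (\<lambda>c. q (skip k c)) {1..?n}"
  have p: "p \<in> linear_extensions P"
    unfolding p_def using restrict_skip_in_labelings[OF q b(3) b(2)] ab(4) b(1) by simp
  have p_prefix: "p c = q c" if "c \<in> {1..k}" for c
    using that b(2) unfolding p_def skip_def by auto
  have "q b \<in> maximal_boxes (p ` {1..k})"
  proof -
    have "q b \<in> p ` {1..k}" using ab(4) b(3) p_prefix by (metis image_eqI)
    moreover have "\<not> box_less (q b) (p c)" if "c \<in> {1..k}" for c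
      using labelingsD(3)[OF q, of b c] ab(2) b that p_prefix by fastforce
    ultimately show ?thesis unfolding maximal_boxes_def by blast
  qed
  then have data: "(p, k, q b) \<in> insertion_data P"
    unfolding insertion_data_def using p b(2) by simp
  have "q c = insert_entry ?n p k (q b) c" for c
  proof (cases "c \<in> {1..Suc ?n}")
    case True
    show ?thesis
    proof (cases rule: skip_cases[OF b(2) True])
      case 1 then show ?thesis using b(1) by (simp add: insert_entry_Suc)
    next
      case (2 c')
      then show ?thesis using b(2) by (simp add: insert_entry_skip p_def)
    qed
  next
    case False
    then show ?thesis
      using labelingsD(1)[OF q] labelingsD(1)[OF insert_entry_in_labelings[OF data]]
      by (simp add: PiE_def extensional_def)
  qed
  then show ?thesis using that data by blast
qed

lemma bij_betw_insert_entry: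
  assumes "finite P"
  shows "bij_betw (\<lambda>(p, k, u). insert_entry (card P) p k u) (insertion_data P)
    (labelings P (Suc (card P)))"
  unfolding bij_betw_def
proof (intro conjI inj_on_insert_entry equalityI subsetI)
  fix q assume "q \<in> (\<lambda>(p, k, u). insert_entry (card P) p k u) ` insertion_data P"
  then show "q \<in> labelings P (Suc (card P))" using insert_entry_in_labelings by auto
next
  fix q assume "q \<in> labelings P (Suc (card P))"
  then obtain p k u where "(p, k, u) \<in> insertion_data P" "q = insert_entry (card P) p k u"
    using labeling_eq_insert_entry[OF assms] by blast
  then show "q \<in> (\<lambda>(p, k, u). insert_entry (card P) p k u) ` insertion_data P"
    by (auto intro: rev_image_eqI)
qed

lemma prod_insert_entry:
  fixes f :: "nat \<times> nat \<Rightarrow> 'a::comm_monoid_mult"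
  assumes "(p, k, u) \<in> insertion_data P"
  shows "(\<Prod>c\<in>{1..Suc (card P)}. f (insert_entry (card P) p k u c)) = f u * (\<Prod>v\<in>P. f v)"
proof -
  let ?n = "card P" and ?q = "insert_entry (card P) p k u"
  have k: "k \<le> ?n" using insertion_dataD(2)[OF assms] .
  have "(\<Prod>c\<in>{1..Suc ?n}. f (?q c)) = f (?q (Suc k)) * (\<Prod>c\<in>{1..Suc ?n} - {Suc k}. f (?q c))"
    using k by (intro prod.remove) auto
  also have "(\<Prod>c\<in>{1..Suc ?n} - {Suc k}. f (?q c)) = (\<Prod>c\<in>{1..?n}. f (?q (skip k c)))"
    using prod.reindex_bij_betw[OF bij_betw_skip[OF k], of "\<lambda>c. f (?q c)"] by simp
  also have "\<dots> = (\<Prod>c\<in>{1..?n}. f (p c))"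
    using insert_entry_skip[OF _ k] by (intro prod.cong) auto
  also have "\<dots> = (\<Prod>v\<in>P. f v)"
    using prod.reindex_bij_betw[OF linear_extension_bij_betw[OF insertion_dataD(1)[OF assms]]] .
  finally show ?thesis by (simp add: insert_entry_Suc)
qed

lemma sum_insertion_data:
  fixes f :: "(nat \<Rightarrow> nat \<times> nat) \<Rightarrow> nat \<times> nat \<Rightarrow> 'a::comm_monoid_add"
  assumes "finite P"
  shows "(\<Sum>(p, k, u)\<in>insertion_data P. f p u)
    = (\<Sum>p\<in>linear_extensions P. \<Sum>k=0..card P. \<Sum>u\<in>maximal_boxes (p ` {1..k}). f p u)"
proof -
  have fin: "finite (maximal_boxes (p ` {1..k}))" for p and k :: nat
    by (rule finite_subset[of _ "p ` {1..k}"]) (auto simp: maximal_boxes_def)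
  have "(\<Sum>p\<in>linear_extensions P. \<Sum>k=0..card P. \<Sum>u\<in>maximal_boxes (p ` {1..k}). f p u)
      = (\<Sum>p\<in>linear_extensions P. \<Sum>(k, u)\<in>(SIGMA k:{0..card P}. maximal_boxes (p ` {1..k})). f p u)"
    by (intro sum.cong refl sum.Sigma) (use fin in auto)
  also have "\<dots> = (\<Sum>(p, k, u)\<in>insertion_data P. f p u)"
    unfolding insertion_data_def
    by (subst sum.Sigma) (use fin finite_labelings[OF assms] in \<open>auto simp: split_def\<close>)
  finally show ?thesis ..
qed

section \<open>Standard shifted tableaux as labelings with primes\<close>

lemma finite_shifted_diagram: "finite (shifted_diagram lam)"
proof -
  have "shifted_diagram lam \<subseteq> {0..length lam} \<times> {0..length lam + sum_list lam}"
  proof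
    fix u assume "u \<in> shifted_diagram lam"
    then obtain i j where u: "u = (i, j)" "1 \<le> i" "i \<le> length lam" "j + 1 \<le> i + lam ! (i - 1)"
      unfolding shifted_diagram_def by auto
    then have "lam ! (i - 1) \<le> sum_list lam" by (simp add: elem_le_sum_list)
    then show "u \<in> {0..length lam} \<times> {0..length lam + sum_list lam}" using u by auto
  qed
  then show ?thesis by (rule finite_subset) auto
qed

lemma card_shifted_diagram: "card (shifted_diagram lam) = size_part lam"
proof -
  have "shifted_diagram lam = (SIGMA i:{1..length lam}. {i..<i + lam ! (i - 1)})"
    unfolding shifted_diagram_def by auto
  then have "card (shifted_diagram lam) = (\<Sum>i=1..length lam. lam ! (i - 1))"
    by (simp add: card_SigmaI)
  also have "\<dots> = (\<Sum>i<length lam. lam ! i)"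
    by (rule sum.reindex_bij_witness[of _ Suc "\<lambda>i. i - 1"]) auto
  also have "\<dots> = size_part lam"
    unfolding size_part_def by (simp add: sum_list_sum_nth atLeast0LessThan)
  finally show ?thesis .
qed

lemma diagonal_shifted_diagram:
  assumes "strict_partition lam"
  shows "{v \<in> shifted_diagram lam. fst v = snd v} = (\<lambda>i. (i, i)) ` {1..length lam}"
proof -
  have "(i, i) \<in> shifted_diagram lam" if "i \<in> {1..length lam}" for i
  proof -
    have "lam ! (i - 1) \<in> set lam" using that by auto
    then show ?thesis using that assms unfolding strict_partition_def shifted_diagram_def by auto
  qed
  then show ?thesis unfolding shifted_diagram_def by auto
qed

definition tableau_of :: "nat \<Rightarrow> (nat \<Rightarrow> nat \<times> nat) \<Rightarrow> (nat \<Rightarrow> bool) \<Rightarrow> nat \<times> nat \<Rightarrow> letter set"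
  where "tableau_of N pos s v = (\<lambda>c. (c, s c)) ` {c \<in> {1..N}. pos c = v}"

lemma mem_tableau_of: "(c, b) \<in> tableau_of N pos s v \<longleftrightarrow> c \<in> {1..N} \<and> pos c = v \<and> b = s c"
  unfolding tableau_of_def by auto

lemma card_tableau_of: "card (tableau_of N pos s v) = card {c \<in> {1..N}. pos c = v}"
  unfolding tableau_of_def by (rule card_image) (auto intro: inj_onI)

lemma image_mset_eq_mset_set_iff:
  assumes "finite X" "finite Y"
  shows "image_mset g (mset_set X) = mset_set Y \<longleftrightarrow> bij_betw g X Y"
proof
  assume eq: "image_mset g (mset_set X) = mset_set Y"
  then have "g ` X = Y"
    using assms by (metis finite_set_mset_mset_set set_image_mset)
  moreover have "card X = card Y"
    using arg_cong[OF eq, of size] by simp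
  ultimately show "bij_betw g X Y"
    using assms(1) by (simp add: bij_betw_def eq_card_imp_inj_on)
qed (simp add: bij_betw_def image_mset_mset_set)

lemma monomial_svt_eq_mset_set_iff:
  assumes "shifted_svt lam T"
  shows "monomial_svt lam T = mset_set {1..N}
    \<longleftrightarrow> bij_betw (\<lambda>x. fst (snd x)) (Sigma (shifted_diagram lam) T) {1..N}"
proof -
  have fin: "finite (T u)" if "u \<in> shifted_diagram lam" for u
    using assms that unfolding shifted_svt_def by blast
  have "monomial_svt lam T = (\<Sum>x\<in>Sigma (shifted_diagram lam) T. {#fst (snd x)#})"
    unfolding monomial_svt_def using finite_shifted_diagram fin
    by (subst sum.Sigma) (auto simp: case_prod_unfold)
  also have "\<dots> = image_mset (\<lambda>x. fst (snd x)) (mset_set (Sigma (shifted_diagram lam) T))"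
    by (induction rule: finite_induct[OF finite_SigmaI[OF finite_shifted_diagram fin]]) auto
  finally show ?thesis
    by (simp add: image_mset_eq_mset_set_iff finite_shifted_diagram fin)
qed

lemma shifted_svt_tableau_of:
  assumes "pos \<in> labelings (shifted_diagram lam) N"
  shows "shifted_svt lam (tableau_of N pos s)"
proof -
  let ?P = "shifted_diagram lam" and ?T = "tableau_of N pos s"
  note pos = labelingsD[OF assms]
  have fin: "finite (?T u)" for u unfolding tableau_of_def by simp
  have nonempty: "?T u \<noteq> {}" if "u \<in> ?P" for u
    using that pos(2) by (force simp: tableau_of_def)
  have outside: "?T u = {}" if "u \<notin> ?P" for u
    using that pos(1) by (force simp: tableau_of_def)
  have "Max (?T u) \<le> Min (?T v)" if "u \<in> ?P" "v \<in> ?P" "box_less u v" for u v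
  proof -
    obtain c b d b' where "Max (?T u) = (c, b)" "Min (?T v) = (d, b')" by fastforce
    moreover have "Max (?T u) \<in> ?T u" "Min (?T v) \<in> ?T v"
      using fin nonempty that(1,2) by auto
    ultimately have "c < d" using pos(3) that(3) by (auto simp: mem_tableau_of)
    with \<open>Max (?T u) = (c, b)\<close> \<open>Min (?T v) = (d, b')\<close> show ?thesis by simp
  qed
  then show ?thesis
    unfolding shifted_svt_def using fin nonempty outside
    by (auto simp: tableau_of_def)
qed

lemma labelings_of_shifted_svt:
  assumes "pos \<in> {1..N} \<rightarrow>\<^sub>E shifted_diagram lam" "shifted_svt lam (tableau_of N pos s)"
  shows "pos \<in> labelings (shifted_diagram lam) N"
  unfolding labelings_def respects_boxes_def
proof (intro CollectI conjI ballI impI assms(1))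
  let ?P = "shifted_diagram lam" and ?T = "tableau_of N pos s"
  note svt = assms(2)[unfolded shifted_svt_def]
  show "pos ` {1..N} = ?P"
  proof
    show "?P \<subseteq> pos ` {1..N}"
    proof
      fix v assume "v \<in> ?P"
      then obtain l where "l \<in> ?T v" using svt by blast
      then show "v \<in> pos ` {1..N}" by (auto simp: tableau_of_def)
    qed
  qed (use assms(1) in auto)
next
  fix c d assume c: "c \<in> {1..N}" and d: "d \<in> {1..N}" and less: "box_less (pos c) (pos d)"
  let ?P = "shifted_diagram lam" and ?T = "tableau_of N pos s"
  note svt = assms(2)[unfolded shifted_svt_def]
  have in_P: "pos c \<in> ?P" "pos d \<in> ?P" using assms(1) c d by auto
  have T: "(c, s c) \<in> ?T (pos c)" "(d, s d) \<in> ?T (pos d)" using c d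
    by (simp_all add: mem_tableau_of)
  have "(c, s c) \<le> Max (?T (pos c))" using T(1) by (simp add: tableau_of_def)
  also have "\<dots> \<le> Min (?T (pos d))" using svt in_P less by blast
  also have "\<dots> \<le> (d, s d)" using T(2) by (simp add: tableau_of_def)
  \<comment> \<open>letters are ordered lexicographically\<close>
  finally have "c \<le> d" by auto
  moreover have "c \<noteq> d" using less unfolding box_less_def by auto
  ultimately show "c < d" by simp
qed

lemma monomial_svt_tableau_of:
  assumes "pos \<in> {1..N} \<rightarrow>\<^sub>E shifted_diagram lam" "shifted_svt lam (tableau_of N pos s)"
  shows "monomial_svt lam (tableau_of N pos s) = mset_set {1..N}"
  unfolding monomial_svt_eq_mset_set_iff[OF assms(2)] bij_betw_def
proof
  show "inj_on (\<lambda>x. fst (snd x)) (Sigma (shifted_diagram lam) (tableau_of N pos s))"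
    by (rule inj_onI) (auto simp: tableau_of_def)
  show "(\<lambda>x. fst (snd x)) ` Sigma (shifted_diagram lam) (tableau_of N pos s) = {1..N}"
  proof
    show "{1..N} \<subseteq> (\<lambda>x. fst (snd x)) ` Sigma (shifted_diagram lam) (tableau_of N pos s)"
    proof
      fix c assume c: "c \<in> {1..N}"
      then have "(pos c, (c, s c)) \<in> Sigma (shifted_diagram lam) (tableau_of N pos s)"
        using assms(1) by (auto simp: mem_tableau_of)
      then show "c \<in> (\<lambda>x. fst (snd x)) ` Sigma (shifted_diagram lam) (tableau_of N pos s)"
        by (rule rev_image_eqI) simp
    qed
  qed (auto simp: tableau_of_def)
qed

lemma standard_tableau_eq_tableau_of:
  assumes "shifted_svt lam T" "monomial_svt lam T = mset_set {1..N}"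
  obtains pos s where "pos \<in> {1..N} \<rightarrow>\<^sub>E shifted_diagram lam" "s \<in> {1..N} \<rightarrow>\<^sub>E UNIV"
    "T = tableau_of N pos s"
proof -
  let ?S = "Sigma (shifted_diagram lam) T" and ?entry = "\<lambda>x :: (nat \<times> nat) \<times> letter. fst (snd x)"
  have bij: "bij_betw ?entry ?S {1..N}"
    using assms monomial_svt_eq_mset_set_iff by blast
  define g where "g = the_inv_into ?S ?entry"
  have g: "g c \<in> ?S" "?entry (g c) = c" if "c \<in> {1..N}" for c
    using bij that unfolding g_def
    by (auto intro: the_inv_into_into f_the_inv_into_f_bij_betw simp: bij_betw_def)
  have g_entry: "g (?entry x) = x" if "x \<in> ?S" for x
    using bij that unfolding g_def bij_betw_def by (blast intro: the_inv_into_f_f)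
  define pos where "pos = restrict (\<lambda>c. fst (g c)) {1..N}"
  define s where "s = restrict (\<lambda>c. snd (snd (g c))) {1..N}"
  have g_eq: "g c = (pos c, (c, s c))" if "c \<in> {1..N}" for c
    using g(2)[OF that] that unfolding pos_def s_def by (cases "g c") auto
  have outside: "T v = {}" if "v \<notin> shifted_diagram lam" for v
    using assms(1) that unfolding shifted_svt_def by blast
  have "(c, b) \<in> T v \<longleftrightarrow> c \<in> {1..N} \<and> pos c = v \<and> b = s c" for c b v
  proof
    assume cb: "(c, b) \<in> T v"
    then have "(v, (c, b)) \<in> ?S" using outside by fastforce
    moreover from this have "c \<in> {1..N}" using bij unfolding bij_betw_def by force
    ultimately show "c \<in> {1..N} \<and> pos c = v \<and> b = s c"
      using g_entry[of "(v, (c, b))"] g_eq by auto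
  next
    assume "c \<in> {1..N} \<and> pos c = v \<and> b = s c"
    then show "(c, b) \<in> T v" using g(1) g_eq by fastforce
  qed
  then have "T = tableau_of N pos s"
    by (intro ext set_eqI) (metis mem_tableau_of prod.collapse)
  moreover have "pos \<in> {1..N} \<rightarrow>\<^sub>E shifted_diagram lam"
    using g(1) unfolding pos_def by (fastforce simp: SigmaE)
  moreover have "s \<in> {1..N} \<rightarrow>\<^sub>E UNIV" unfolding s_def by auto
  ultimately show ?thesis using that by blast
qed

lemma inj_on_tableau_of:
  "inj_on (\<lambda>(pos, s). tableau_of N pos s) (({1..N} \<rightarrow>\<^sub>E P) \<times> ({1..N} \<rightarrow>\<^sub>E UNIV))"
proof (rule inj_onI, clarify)
  fix pos s pos' s'
  assume dom: "pos \<in> {1..N} \<rightarrow>\<^sub>E P" "s \<in> {1..N} \<rightarrow>\<^sub>E (UNIV :: bool set)"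
    "pos' \<in> {1..N} \<rightarrow>\<^sub>E P" "s' \<in> {1..N} \<rightarrow>\<^sub>E (UNIV :: bool set)"
    and eq: "tableau_of N pos s = tableau_of N pos' s'"
  have same: "pos c = pos' c \<and> s c = s' c" if "c \<in> {1..N}" for c
    using eq mem_tableau_of[of c "s c" N pos s "pos c"]
      mem_tableau_of[of c "s c" N pos' s' "pos c"] that
    by simp
  show "pos = pos' \<and> s = s'"
    using PiE_ext[OF dom(1,3)] PiE_ext[OF dom(2,4)] same by blast
qed

lemma standard_svt_eq_tableau_of:
  assumes "shifted_svt lam T" "standard_svt lam T"
  obtains N pos s where "pos \<in> labelings (shifted_diagram lam) N" "s \<in> {1..N} \<rightarrow>\<^sub>E UNIV"
    "T = tableau_of N pos s"
proof -
  obtain N where "monomial_svt lam T = mset_set {1..N}"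
    using assms(2) unfolding standard_svt_def by blast
  then obtain pos s where pos: "pos \<in> {1..N} \<rightarrow>\<^sub>E shifted_diagram lam" and "s \<in> {1..N} \<rightarrow>\<^sub>E UNIV"
    and T_eq: "T = tableau_of N pos s"
    by (rule standard_tableau_eq_tableau_of[OF assms(1)])
  moreover have "pos \<in> labelings (shifted_diagram lam) N"
    using labelings_of_shifted_svt[OF pos] assms(1) T_eq by simp
  ultimately show ?thesis using that by blast
qed

lemma standard_svt_tableau_of:
  assumes "pos \<in> labelings (shifted_diagram lam) N"
  shows "shifted_svt lam (tableau_of N pos s)" "standard_svt lam (tableau_of N pos s)"
  using shifted_svt_tableau_of[OF assms] monomial_svt_tableau_of[OF labelingsD(1)[OF assms]]
  unfolding standard_svt_def by blast+

lemma sum_card_fibres: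
  assumes "finite P" "pos \<in> {1..N} \<rightarrow> P"
  shows "(\<Sum>v\<in>P. card {c \<in> {1..N}. pos c = v}) = N"
proof -
  have "(\<Sum>v\<in>P. card {c \<in> {1..N}. pos c = v}) = (\<Sum>v\<in>P. \<Sum>c\<in>{1..N}. if pos c = v then 1 else 0)"
    by (simp add: sum.If_cases Int_def)
  also have "\<dots> = (\<Sum>c\<in>{1..N}. \<Sum>v\<in>P. if pos c = v then 1 else 0)"
    by (rule sum.swap)
  also have "\<dots> = N"
    using assms by (simp add: sum.delta' Pi_iff)
  finally show ?thesis .
qed

lemma sum_eq_card_plus_sum_diff_one:
  fixes f :: "'a \<Rightarrow> nat"
  assumes "\<And>v. v \<in> P \<Longrightarrow> 1 \<le> f v"
  shows "sum f P = card P + (\<Sum>v\<in>P. f v - 1)"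
proof -
  have "sum f P = (\<Sum>v\<in>P. 1 + (f v - 1))"
    by (rule sum.cong[OF refl]) (use assms in fastforce)
  then show ?thesis by (simp only: sum.distrib card_eq_sum)
qed

lemma sum_eq_card_iff_all_one:
  fixes f :: "'a \<Rightarrow> nat"
  assumes "finite P" "\<And>v. v \<in> P \<Longrightarrow> 1 \<le> f v"
  shows "sum f P = card P \<longleftrightarrow> (\<forall>v\<in>P. f v = 1)"
proof -
  have "sum f P = card P + (\<Sum>v\<in>P. f v - 1)"
    using assms(2) by (rule sum_eq_card_plus_sum_diff_one)
  then show ?thesis using assms by (auto simp: sum_eq_0_iff intro: antisym)
qed

lemma sum_eq_Suc_card_iff_one_two:
  fixes f :: "'a \<Rightarrow> nat"
  assumes "finite P" "\<And>v. v \<in> P \<Longrightarrow> 1 \<le> f v"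
  shows "sum f P = Suc (card P) \<longleftrightarrow> (\<exists>!u. u \<in> P \<and> f u = 2) \<and> (\<forall>v\<in>P. f v = 1 \<or> f v = 2)"
    (is "_ \<longleftrightarrow> ?rhs")
proof -
  have "sum f P = Suc (card P) \<longleftrightarrow> (\<Sum>v\<in>P. f v - 1) = 1"
    using sum_eq_card_plus_sum_diff_one[of P f] assms(2) by simp
  also have "\<dots> \<longleftrightarrow> (\<exists>u\<in>P. f u - 1 = 1 \<and> (\<forall>v\<in>P. u \<noteq> v \<longrightarrow> f v - 1 = 0))"
    by (rule sum_eq_1_iff[OF assms(1)])
  also have "\<dots> \<longleftrightarrow> (\<exists>u\<in>P. f u = 2 \<and> (\<forall>v\<in>P. u \<noteq> v \<longrightarrow> f v = 1))"
    using assms(2) by (intro bex_cong conj_cong ball_cong imp_cong refl) (force dest: assms(2))+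
  also have "\<dots> \<longleftrightarrow> ?rhs"
  proof
    assume "\<exists>u\<in>P. f u = 2 \<and> (\<forall>v\<in>P. u \<noteq> v \<longrightarrow> f v = 1)"
    then obtain u where "u \<in> P" "f u = 2" "\<forall>v\<in>P. u \<noteq> v \<longrightarrow> f v = 1" by blast
    then show ?rhs by (intro conjI ex1I[of _ u]) auto
  next
    assume ?rhs
    then obtain u where "u \<in> P" "f u = 2" "\<forall>v\<in>P. f v = 2 \<longrightarrow> v = u" "\<forall>v\<in>P. f v = 1 \<or> f v = 2"
      by blast
    then show "\<exists>u\<in>P. f u = 2 \<and> (\<forall>v\<in>P. u \<noteq> v \<longrightarrow> f v = 1)" by metis
  qed
  finally show ?thesis .
qed

lemma card_fibre_labeling_ge_one:
  assumes "pos \<in> labelings P N" "v \<in> P"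
  shows "1 \<le> card {c \<in> {1..N}. pos c = v}"
proof -
  have "v \<in> pos ` {1..N}" using labelingsD(2)[OF assms(1)] assms(2) by simp
  then have "{c \<in> {1..N}. pos c = v} \<noteq> {}" by (auto simp: image_iff)
  then show ?thesis by (simp add: Suc_leI card_gt_0_iff)
qed

lemma barely_set_valued_tableau_of_iff:
  assumes "pos \<in> labelings (shifted_diagram lam) N"
  shows "barely_set_valued lam (tableau_of N pos s) \<longleftrightarrow> N = Suc (size_part lam)"
proof -
  have "(\<Sum>v\<in>shifted_diagram lam. card {c \<in> {1..N}. pos c = v}) = N"
    using sum_card_fibres[OF finite_shifted_diagram] labelingsD(1)[OF assms] by (simp add: PiE_iff)
  then show ?thesis
    unfolding barely_set_valued_def card_tableau_of
    using sum_eq_Suc_card_iff_one_two[of "shifted_diagram lam" "\<lambda>v. card {c \<in> {1..N}. pos c = v}",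
        OF finite_shifted_diagram card_fibre_labeling_ge_one[OF assms]]
    by (simp add: card_shifted_diagram)
qed

lemma singleton_cells_tableau_of_iff:
  assumes "pos \<in> labelings (shifted_diagram lam) N"
  shows "(\<forall>u\<in>shifted_diagram lam. card (tableau_of N pos s u) = 1) \<longleftrightarrow> N = size_part lam"
proof -
  have "(\<Sum>v\<in>shifted_diagram lam. card {c \<in> {1..N}. pos c = v}) = N"
    using sum_card_fibres[OF finite_shifted_diagram] labelingsD(1)[OF assms] by (simp add: PiE_iff)
  then show ?thesis
    unfolding card_tableau_of
    using sum_eq_card_iff_all_one[of "shifted_diagram lam" "\<lambda>v. card {c \<in> {1..N}. pos c = v}",
        OF finite_shifted_diagram card_fibre_labeling_ge_one[OF assms]]
    by (simp add: card_shifted_diagram)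
qed

lemma diagonally_unprimed_tableau_of_iff:
  assumes "pos \<in> {1..N} \<rightarrow>\<^sub>E shifted_diagram lam"
  shows "diagonally_unprimed lam (tableau_of N pos s)
    \<longleftrightarrow> (\<forall>c\<in>{1..N}. fst (pos c) = snd (pos c) \<longrightarrow> \<not> s c)"
proof
  assume "diagonally_unprimed lam (tableau_of N pos s)"
  then show "\<forall>c\<in>{1..N}. fst (pos c) = snd (pos c) \<longrightarrow> \<not> s c"
    using assms unfolding diagonally_unprimed_def
    by (metis PiE_mem mem_tableau_of prod.collapse snd_conv)
next
  assume "\<forall>c\<in>{1..N}. fst (pos c) = snd (pos c) \<longrightarrow> \<not> s c"
  then show "diagonally_unprimed lam (tableau_of N pos s)"
    unfolding diagonally_unprimed_def tableau_of_def by auto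
qed

lemma unprimed_tableau_of_iff:
  assumes "pos \<in> {1..N} \<rightarrow>\<^sub>E P"
  shows "(\<forall>u\<in>P. \<forall>l\<in>tableau_of N pos s u. \<not> snd l) \<longleftrightarrow> (\<forall>c\<in>{1..N}. \<not> s c)"
proof
  assume "\<forall>u\<in>P. \<forall>l\<in>tableau_of N pos s u. \<not> snd l"
  then show "\<forall>c\<in>{1..N}. \<not> s c"
    using assms by (metis PiE_mem mem_tableau_of snd_conv)
qed (auto simp: tableau_of_def)

lemma unprimed_standard_tableaux_eq_image:
  fixes lam :: "nat list"
  defines "P \<equiv> shifted_diagram lam" and "n \<equiv> size_part lam"
  shows "{T. shifted_svt lam T \<and> standard_svt lam T \<and> (\<forall>u\<in>P. card (T u) = 1)
      \<and> (\<forall>u\<in>P. \<forall>c\<in>T u. \<not> snd c)}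
        = (\<lambda>p. tableau_of n p (restrict (\<lambda>_. False) {1..n})) ` linear_extensions P"
proof (intro equalityI subsetI)
  fix T assume "T \<in> {T. shifted_svt lam T \<and> standard_svt lam T \<and> (\<forall>u\<in>P. card (T u) = 1)
      \<and> (\<forall>u\<in>P. \<forall>c\<in>T u. \<not> snd c)}"
  then have T: "shifted_svt lam T" "standard_svt lam T" "\<forall>u\<in>P. card (T u) = 1"
    "\<forall>u\<in>P. \<forall>c\<in>T u. \<not> snd c"
    by auto
  obtain M pos s where pos: "pos \<in> labelings P M" and s: "s \<in> {1..M} \<rightarrow>\<^sub>E UNIV"
    and T_eq: "T = tableau_of M pos s"
    using standard_svt_eq_tableau_of[OF T(1,2)] unfolding P_def by blast
  have "M = n"
    using T(3) singleton_cells_tableau_of_iff[OF pos[unfolded P_def]] unfolding T_eq n_def P_def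
      by simp
  moreover have "s = restrict (\<lambda>_. False) {1..n}"
    using T(4) unprimed_tableau_of_iff[OF labelingsD(1)[OF pos]] s \<open>M = n\<close>
    unfolding T_eq by (intro PiE_ext[OF s]) auto
  ultimately show "T \<in> (\<lambda>p. tableau_of n p (restrict (\<lambda>_. False) {1..n})) ` linear_extensions P"
    using pos T_eq by (simp add: P_def n_def card_shifted_diagram)
next
  fix T assume "T \<in> (\<lambda>p. tableau_of n p (restrict (\<lambda>_. False) {1..n})) ` linear_extensions P"
  then obtain p where p: "p \<in> labelings (shifted_diagram lam) n"
    and T_eq: "T = tableau_of n p (restrict (\<lambda>_. False) {1..n})"
    by (auto simp: P_def n_def card_shifted_diagram)
  show "T \<in> {T. shifted_svt lam T \<and> standard_svt lam T \<and> (\<forall>u\<in>P. card (T u) = 1)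
      \<and> (\<forall>u\<in>P. \<forall>c\<in>T u. \<not> snd c)}"
    using standard_svt_tableau_of[OF p] singleton_cells_tableau_of_iff[OF p]
      unprimed_tableau_of_iff[OF labelingsD(1)[OF p]]
    unfolding T_eq P_def n_def by simp
qed

lemma g_shifted_eq_card_linear_extensions:
  "g_shifted lam = card (linear_extensions (shifted_diagram lam))"
proof -
  let ?P = "shifted_diagram lam" and ?n = "size_part lam"
  let ?s = "restrict (\<lambda>_. False) {1..?n}"
  have "inj_on (\<lambda>p. tableau_of ?n p ?s) (linear_extensions ?P)"
  proof (rule inj_onI)
    fix p q assume "p \<in> linear_extensions ?P" "q \<in> linear_extensions ?P"
      and eq: "tableau_of ?n p ?s = tableau_of ?n q ?s"
    then have "p \<in> {1..?n} \<rightarrow>\<^sub>E ?P" "q \<in> {1..?n} \<rightarrow>\<^sub>E ?P"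
      using labelingsD(1) by (simp_all add: card_shifted_diagram)
    then have "(p, ?s) = (q, ?s)"
      using eq by (intro inj_onD[OF inj_on_tableau_of[of ?n ?P]]) auto
    then show "p = q" by simp
  qed
  then show ?thesis
    unfolding g_shifted_def unprimed_standard_tableaux_eq_image by (simp add: card_image)
qed

section \<open>Counting barely set-valued tableaux\<close>

text \<open>The flag diag selects part (ii), where entries in diagonal boxes must be unprimed.\<close>

definition prime_choices :: "bool \<Rightarrow> nat \<Rightarrow> (nat \<Rightarrow> nat \<times> nat) \<Rightarrow> (nat \<Rightarrow> bool) set" where
  "prime_choices diag N pos =
     (\<Pi>\<^sub>E c\<in>{1..N}. if diag \<and> fst (pos c) = snd (pos c) then {False} else UNIV)"

definition barely_tableaux :: "bool \<Rightarrow> nat list \<Rightarrow> (nat \<times> nat \<Rightarrow> letter set) set" where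
  "barely_tableaux diag lam = {T. shifted_svt lam T \<and> standard_svt lam T
     \<and> barely_set_valued lam T \<and> (diag \<longrightarrow> diagonally_unprimed lam T)}"

lemma mem_prime_choices_iff:
  "s \<in> prime_choices diag N pos \<longleftrightarrow>
     s \<in> {1..N} \<rightarrow>\<^sub>E UNIV \<and> (diag \<longrightarrow> (\<forall>c\<in>{1..N}. fst (pos c) = snd (pos c) \<longrightarrow> \<not> s c))"
  unfolding prime_choices_def PiE_iff by auto

lemma barely_tableaux_eq_image:
  fixes lam :: "nat list"
  defines "P \<equiv> shifted_diagram lam" and "N \<equiv> Suc (size_part lam)"
  shows "barely_tableaux diag lam
    = (\<lambda>(pos, s). tableau_of N pos s) ` (SIGMA pos:labelings P N. prime_choices diag N pos)"
    (is "_ = ?image")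
proof (intro equalityI subsetI)
  fix T assume "T \<in> barely_tableaux diag lam"
  then have T: "shifted_svt lam T" "standard_svt lam T" "barely_set_valued lam T"
    "diag \<longrightarrow> diagonally_unprimed lam T"
    unfolding barely_tableaux_def by auto
  obtain M pos s where pos: "pos \<in> labelings P M" and s: "s \<in> {1..M} \<rightarrow>\<^sub>E UNIV"
    and T_eq: "T = tableau_of M pos s"
    using standard_svt_eq_tableau_of[OF T(1,2)] unfolding P_def by blast
  have "M = N"
    using T(3) barely_set_valued_tableau_of_iff[OF pos[unfolded P_def]] unfolding T_eq N_def by simp
  moreover have "s \<in> prime_choices diag M pos"
    using T(4) s diagonally_unprimed_tableau_of_iff[OF labelingsD(1)[OF pos[unfolded P_def]]]
    unfolding T_eq mem_prime_choices_iff by simp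
  ultimately show "T \<in> ?image"
    using pos T_eq by force
next
  fix T assume "T \<in> ?image"
  then obtain pos s where pos: "pos \<in> labelings (shifted_diagram lam) N"
    and s: "s \<in> prime_choices diag N pos" and T_eq: "T = tableau_of N pos s"
    unfolding P_def by auto
  show "T \<in> barely_tableaux diag lam"
    using standard_svt_tableau_of[OF pos] barely_set_valued_tableau_of_iff[OF pos]
      diagonally_unprimed_tableau_of_iff[OF labelingsD(1)[OF pos]] s
    unfolding barely_tableaux_def T_eq N_def mem_prime_choices_iff by simp
qed

lemma card_barely_tableaux:
  fixes lam :: "nat list"
  defines "P \<equiv> shifted_diagram lam" and "N \<equiv> Suc (size_part lam)"
  shows "card (barely_tableaux diag lam) = (\<Sum>pos\<in>labelings P N. card (prime_choices diag N pos))"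
proof -
  have "inj_on (\<lambda>(pos, s). tableau_of N pos s) (SIGMA pos:labelings P N. prime_choices diag N pos)"
    by (rule inj_on_subset[OF inj_on_tableau_of[of N P]])
      (use labelingsD(1) in \<open>auto simp only: mem_prime_choices_iff mem_Sigma_iff mem_Times_iff\<close>)
  then have "card (barely_tableaux diag lam) = card (SIGMA pos:labelings P N. prime_choices diag N pos)"
    unfolding barely_tableaux_eq_image P_def N_def by (simp add: card_image)
  also have "\<dots> = (\<Sum>pos\<in>labelings P N. card (prime_choices diag N pos))"
    by (rule card_SigmaI)
      (auto simp: P_def finite_labelings finite_shifted_diagram prime_choices_def intro!: finite_PiE)
  finally show ?thesis .
qed

definition prime_weight :: "bool \<Rightarrow> nat \<times> nat \<Rightarrow> nat" where
  "prime_weight diag v = (if diag \<and> fst v = snd v then 1 else 2)"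

lemma card_prime_choices: "card (prime_choices diag N pos) = (\<Prod>c\<in>{1..N}. prime_weight diag (pos c))"
  unfolding prime_choices_def prime_weight_def by (simp add: card_PiE if_distrib cong: if_cong)

lemma prod_prime_weight:
  assumes "strict_partition lam"
  shows "(\<Prod>v\<in>shifted_diagram lam. prime_weight diag v)
    = 2 ^ (if diag then size_part lam - length lam else size_part lam)"
proof (cases diag)
  case True
  let ?D = "{v \<in> shifted_diagram lam. fst v = snd v}"
  have card_D: "card ?D = length lam"
    unfolding diagonal_shifted_diagram[OF assms] by (simp add: card_image inj_on_def)
  have "(\<Prod>v\<in>shifted_diagram lam. prime_weight diag v)
      = (\<Prod>v\<in>shifted_diagram lam. if fst v \<noteq> snd v then 2 else 1)"
    using True by (intro prod.cong) (auto simp: prime_weight_def)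
  also have "\<dots> = 2 ^ card {v \<in> shifted_diagram lam. fst v \<noteq> snd v}"
    using prod.inter_filter[OF finite_shifted_diagram[of lam], of "\<lambda>_. 2::nat" "\<lambda>v. fst v \<noteq> snd v"]
    by simp
  also have "{v \<in> shifted_diagram lam. fst v \<noteq> snd v} = shifted_diagram lam - ?D" by blast
  also have "card (shifted_diagram lam - ?D) = size_part lam - length lam"
    using card_D finite_shifted_diagram by (simp add: card_Diff_subset card_shifted_diagram)
  finally show ?thesis using True by simp
qed (simp add: prime_weight_def card_shifted_diagram)

lemma card_barely_tableaux_eq_sum:
  fixes lam :: "nat list"
  defines "P \<equiv> shifted_diagram lam"
  shows "card (barely_tableaux diag lam) = (\<Prod>v\<in>P. prime_weight diag v)
    * (\<Sum>p\<in>linear_extensions P. \<Sum>k=0..card P. \<Sum>u\<in>maximal_boxes (p ` {1..k}). prime_weight diag u)"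
proof -
  have fin: "finite P" unfolding P_def by (rule finite_shifted_diagram)
  have "card (barely_tableaux diag lam)
      = (\<Sum>q\<in>labelings P (Suc (card P)). \<Prod>c\<in>{1..Suc (card P)}. prime_weight diag (q c))"
    unfolding card_barely_tableaux P_def card_prime_choices card_shifted_diagram ..
  also have "\<dots> = (\<Sum>(p, k, u)\<in>insertion_data P.
      \<Prod>c\<in>{1..Suc (card P)}. prime_weight diag (insert_entry (card P) p k u c))"
    using sum.reindex_bij_betw[OF bij_betw_insert_entry[OF fin],
        of "\<lambda>q. \<Prod>c\<in>{1..Suc (card P)}. prime_weight diag (q c)"]
    by (simp add: split_def)
  also have "\<dots> = (\<Sum>(p, k, u)\<in>insertion_data P. prime_weight diag u * (\<Prod>v\<in>P. prime_weight diag v))"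
  proof (rule sum.cong[OF refl])
    fix x assume "x \<in> insertion_data P"
    moreover obtain p k u where "x = (p, k, u)" by (cases x)
    ultimately show "(case x of (p, k, u) \<Rightarrow>
          \<Prod>c\<in>{1..Suc (card P)}. prime_weight diag (insert_entry (card P) p k u c))
        = (case x of (p, k, u) \<Rightarrow> prime_weight diag u * (\<Prod>v\<in>P. prime_weight diag v))"
      using prod_insert_entry by (simp only: prod.case)
  qed
  also have "\<dots> = (\<Prod>v\<in>P. prime_weight diag v)
      * (\<Sum>p\<in>linear_extensions P. \<Sum>k=0..card P. \<Sum>u\<in>maximal_boxes (p ` {1..k}). prime_weight diag u)"
    by (simp add: sum_insertion_data[OF fin] sum_distrib_left sum_distrib_right mult.commute)
  finally show ?thesis .
qed

lemma card_barely_tableaux_eq_exp_maxchain: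
  fixes lam :: "nat list"
  defines "P \<equiv> shifted_diagram lam" and "n \<equiv> size_part lam"
  shows "real (card (barely_tableaux diag lam))
    = real (n + 1) * real (\<Prod>v\<in>P. prime_weight diag v) * real (g_shifted lam)
      * exp_maxchain (order_ideals P) (\<lambda>I. \<Sum>u\<in>maximal_boxes I. real (prime_weight diag u))"
proof -
  let ?S = "\<Sum>p\<in>linear_extensions P. \<Sum>k=0..n. \<Sum>u\<in>maximal_boxes (p ` {1..k}). real (prime_weight diag u)"
  have fin: "finite P" unfolding P_def by (rule finite_shifted_diagram)
  have card: "real (card (barely_tableaux diag lam)) = real (\<Prod>v\<in>P. prime_weight diag v) * ?S"
    unfolding card_barely_tableaux_eq_sum P_def n_def card_shifted_diagram by simp
  have exp: "exp_maxchain (order_ideals P) (\<lambda>I. \<Sum>u\<in>maximal_boxes I. real (prime_weight diag u))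
      = ?S / (real (g_shifted lam) * real (n + 1))"
    unfolding exp_maxchain_order_ideals[OF fin] g_shifted_eq_card_linear_extensions
    by (simp add: P_def n_def card_shifted_diagram)
  \<comment> \<open>Without linear extensions the expectation is a division by zero, but both sides vanish.\<close>
  show ?thesis
  proof (cases "g_shifted lam = 0")
    case True
    then have "linear_extensions P = {}"
      using finite_labelings[OF fin] unfolding g_shifted_eq_card_linear_extensions P_def by simp
    then show ?thesis unfolding card using True by simp
  next
    case False
    have cancel: "d * w * g * (s / (g * d)) = w * s" if "g \<noteq> 0" "d \<noteq> 0" for d w g s :: real
      using that by (simp add: field_simps)
    show ?thesis unfolding card exp using False by (simp add: cancel)
  qed
qed

lemma sum_toggle_minus_diagonal:
  assumes "strict_partition lam" "I \<in> order_ideals (shifted_diagram lam)"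
  shows "(\<Sum>i=1..length lam. real (toggle_minus (i, i) I))
    = real (card {u \<in> maximal_boxes I. fst u = snd u})"
proof -
  have sub: "maximal_boxes I \<subseteq> shifted_diagram lam"
    using order_ideals_subset[OF assms(2)] unfolding maximal_boxes_def by blast
  have "{u \<in> maximal_boxes I. fst u = snd u}
      = (\<lambda>i. (i, i)) ` {i \<in> {1..length lam}. (i, i) \<in> maximal_boxes I}"
  proof (intro equalityI subsetI)
    fix u assume u: "u \<in> {u \<in> maximal_boxes I. fst u = snd u}"
    then have "u \<in> {v \<in> shifted_diagram lam. fst v = snd v}" using sub by auto
    then obtain i where "i \<in> {1..length lam}" "u = (i, i)"
      unfolding diagonal_shifted_diagram[OF assms(1)] by blast
    then show "u \<in> (\<lambda>i. (i, i)) ` {i \<in> {1..length lam}. (i, i) \<in> maximal_boxes I}"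
      using u by auto
  qed auto
  then have "card {u \<in> maximal_boxes I. fst u = snd u}
      = card {i \<in> {1..length lam}. (i, i) \<in> maximal_boxes I}"
    by (simp add: card_image inj_on_def)
  then show ?thesis
    unfolding toggle_minus_eq using sum.inter_filter[of "{1..length lam}" "\<lambda>_. 1::real"]
    by (simp add: if_distrib cong: if_cong)
qed

lemma sum_prime_weight_maximal_boxes:
  assumes "strict_partition lam" "I \<in> order_ideals (shifted_diagram lam)"
  shows "(\<Sum>u\<in>maximal_boxes I. real (prime_weight diag u))
    = 2 * real (ddeg (order_ideals (shifted_diagram lam)) I)
      - (if diag then \<Sum>i=1..length lam. real (toggle_minus (i, i) I) else 0)"
proof -
  have "finite (maximal_boxes I)"
    using order_ideals_subset[OF assms(2)] finite_shifted_diagram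
    unfolding maximal_boxes_def by (blast intro: finite_subset)
  then have "real (card {u \<in> maximal_boxes I. fst u = snd u})
      = (\<Sum>u\<in>maximal_boxes I. if fst u = snd u then 1 else 0)"
    using sum.inter_filter[of "maximal_boxes I" "\<lambda>_. 1::real"] by simp
  moreover have "(\<Sum>u\<in>maximal_boxes I. real (prime_weight diag u))
      = (\<Sum>u\<in>maximal_boxes I. 2 - (if diag \<and> fst u = snd u then 1 else 0))"
    by (intro sum.cong) (auto simp: prime_weight_def)
  ultimately show ?thesis
    using ddeg_order_ideals[OF finite_shifted_diagram assms(2)] sum_toggle_minus_diagonal[OF assms]
    by (auto simp: sum_subtractf)
qed

lemma real_card_barely_tableaux:
  fixes lam :: "nat list"
  assumes "strict_partition lam"
  defines "L \<equiv> order_ideals (shifted_diagram lam)" and "n \<equiv> size_part lam"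
  shows "real (card (barely_tableaux diag lam))
    = real (n + 1) * 2 ^ (if diag then n - length lam else n) * real (g_shifted lam)
      * exp_maxchain L (\<lambda>I. 2 * real (ddeg L I)
          - (if diag then \<Sum>i=1..length lam. real (toggle_minus (i, i) I) else 0))"
proof -
  have "exp_maxchain L (\<lambda>I. \<Sum>u\<in>maximal_boxes I. real (prime_weight diag u))
      = exp_maxchain L (\<lambda>I. 2 * real (ddeg L I)
          - (if diag then \<Sum>i=1..length lam. real (toggle_minus (i, i) I) else 0))"
    unfolding L_def by (rule exp_maxchain_cong) (rule sum_prime_weight_maximal_boxes[OF assms(1)])
  then show ?thesis
    using card_barely_tableaux_eq_exp_maxchain[of diag lam] prod_prime_weight[OF assms(1)]
    unfolding L_def n_def by simp
qed

theorem lemma7p4: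
  fixes lam :: "nat list"
  assumes "strict_partition lam"
  defines "L \<equiv> order_ideals (shifted_diagram lam)"
  defines "n \<equiv> size_part lam"
  shows "(real (card {T. shifted_svt lam T \<and> standard_svt lam T \<and> barely_set_valued lam T})
           = real (n + 1) * 2 ^ (n + 1) * real (g_shifted lam)
             * exp_maxchain L (\<lambda>I. real (ddeg L I)))
         \<and> (real (card {T. shifted_svt lam T \<and> standard_svt lam T \<and> barely_set_valued lam T
                        \<and> diagonally_unprimed lam T})
           = real (n + 1) * 2 ^ (n - length lam) * real (g_shifted lam)
             * exp_maxchain L (\<lambda>I. 2 * real (ddeg L I)
                  - (\<Sum>i=1..length lam. real (toggle_minus (i, i) I))))"
proof -
  have "exp_maxchain L (\<lambda>I. 2 * real (ddeg L I) - 0) = 2 * exp_maxchain L (\<lambda>I. real (ddeg L I))"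
    using exp_maxchain_cmult[of L 2] by simp
  then show ?thesis
    using real_card_barely_tableaux[OF assms(1), of False]
      real_card_barely_tableaux[OF assms(1), of True]
    unfolding barely_tableaux_def L_def n_def by simp
qed

end
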